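(* Let $m>1$ be an integer and $0<\gamma<\frac12$. Then $\delta\mapsto F(m,\gamma,\delta)$ is non-increasing on $[0,1]$.
   Context: Logarithms base 2; $h$ is binary entropy; $\|u\|$ is Hamming weight. For an integer $m\ge1$, $\gamma\in(0,\frac12)$ and $\delta\in[0,1]$, let $H^*(m,\gamma,\delta)$ be the maximum entropy of a probability distribution $Q$ on $\mathbb{F}_2^m$ satisfying $\Pr_{u\sim Q}(u_i=1)=\gamma$ for all $1\le i\le m$ and $\Pr_{u\sim Q}(\|u\|\text{ odd})=\delta$; set $F(m,\gamma,\delta)=H^*(m,\gamma,\delta)-h(\delta)$ if such $Q$ exists and $F(m,\gamma,\delta)=-\infty$ otherwise. *)

theory Defs
  imports "HOL-Analysis.Analysis" "HOL-Library.Extended_Real"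
begin

text \<open>Vectors u in F_2^m are represented by their supports: subsets of {..<m}.
  A probability distribution Q on F_2^m is a function on these subsets.
  The Hamming weight of u is card u.\<close>

definition hamming_space :: "nat \<Rightarrow> nat set set" where
  "hamming_space m = Pow {..<m}"

definition bin_entropy :: "real \<Rightarrow> real" where
  "bin_entropy x = - (x * log 2 x) - (1 - x) * log 2 (1 - x)"

definition entropy_dist :: "nat \<Rightarrow> (nat set \<Rightarrow> real) \<Rightarrow> real" where
  "entropy_dist m Q = (\<Sum>u\<in>hamming_space m. - (Q u * log 2 (Q u)))"

definition feasible :: "nat \<Rightarrow> real \<Rightarrow> real \<Rightarrow> (nat set \<Rightarrow> real) \<Rightarrow> bool" where
  "feasible m \<gamma> \<delta> Q \<longleftrightarrow>
     (\<forall>u\<in>hamming_space m. Q u \<ge> 0) \<and>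
     (\<Sum>u\<in>hamming_space m. Q u) = 1 \<and>
     (\<forall>i<m. (\<Sum>u\<in>{u\<in>hamming_space m. i \<in> u}. Q u) = \<gamma>) \<and>
     (\<Sum>u\<in>{u\<in>hamming_space m. odd (card u)}. Q u) = \<delta>"

definition Hstar :: "nat \<Rightarrow> real \<Rightarrow> real \<Rightarrow> ereal" where
  "Hstar m \<gamma> \<delta> = Sup {ereal (entropy_dist m Q) | Q. feasible m \<gamma> \<delta> Q}"

definition F :: "nat \<Rightarrow> real \<Rightarrow> real \<Rightarrow> ereal" where
  "F m \<gamma> \<delta> = (if \<exists>Q. feasible m \<gamma> \<delta> Q
                 then Hstar m \<gamma> \<delta> - ereal (bin_entropy \<delta>) else - \<infinity>)"

end

theory Submission
  imports Defs
begin

text \<open>Splitting a distribution \<open>Q\<close> on \<open>\<bbbF>\<^sub>2\<^sup>m\<close> by the parity of the weight gives the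
  chain rule \<open>H(Q) = h(\<delta>) + G(Q)\<close>, where \<open>G(Q)\<close> is the entropy of \<open>Q\<close> conditioned on the
  parity; so it suffices to turn every feasible \<open>Q\<close> with odd mass \<open>\<delta>\<^sub>2\<close> into one with odd
  mass \<open>\<delta>\<^sub>1 \<le> \<delta>\<^sub>2\<close> and no smaller \<open>G\<close>. By the log-sum inequality \<open>G\<close> is concave, and
  by Gibbs' inequality \<open>G(Q) \<le> log Z(r) - m \<gamma> log r\<close> for \<open>0 < r \<le> 1\<close>, where \<open>Z(r)\<close> is the
  sum of \<open>r ^ |u|\<close> over even-weight \<open>u\<close>; here one uses that the corresponding odd sum is
  smaller by \<open>(1 - r) ^ m\<close>. The distribution proportional to \<open>r ^ |u|\<close> on even-weight vectors,
  with \<open>r\<close> chosen by the intermediate value theorem so that its marginals are \<open>\<gamma>\<close>, is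
  feasible with \<open>\<delta> = 0\<close> and attains the bound. Mixing \<open>Q\<close> with it in proportion
  \<open>\<delta>\<^sub>1 / \<delta>\<^sub>2\<close> does the job.\<close>

lemma log_sum_inequality:
  fixes a b :: "'i \<Rightarrow> real"
  assumes "finite I" "1 < c"
    and a: "\<And>i. i \<in> I \<Longrightarrow> 0 \<le> a i" and b: "\<And>i. i \<in> I \<Longrightarrow> 0 \<le> b i"
    and ab: "\<And>i. i \<in> I \<Longrightarrow> 0 < a i \<Longrightarrow> 0 < b i"
  shows "sum a I * log c (sum a I / sum b I) \<le> (\<Sum>i\<in>I. a i * log c (a i / b i))"
proof (cases "sum a I = 0")
  case True
  then have "\<forall>i\<in>I. a i = 0" using assms(1) a sum_nonneg_eq_0_iff by blast
  then show ?thesis using True by simp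
next
  case False
  define A where "A = sum a I"
  define B where "B = sum b I"
  obtain j where "j \<in> I" "0 < a j"
    using False a by (metis le_less sum.neutral)
  then have "0 < b j" using ab by blast
  have "b j \<le> B" unfolding B_def using b \<open>j \<in> I\<close> assms(1) by (intro member_le_sum) auto
  moreover have "0 \<le> A" unfolding A_def using a by (intro sum_nonneg)
  ultimately have AB: "0 < A" "0 < B" using False \<open>0 < b j\<close> by (auto simp: A_def)
  have pointwise: "a i - b i * A / B \<le> a i * ln (a i / b i) - a i * ln (A / B)" if "i \<in> I" for i
  proof (cases "a i = 0")
    case True
    then show ?thesis using AB b[OF that] by simp
  next
    case False
    then have ai: "0 < a i" "0 < b i" using a ab that by (auto simp: le_less)
    have "ln (b i * A / (a i * B)) \<le> b i * A / (a i * B) - 1"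
      using ai AB by (intro ln_le_minus_one) simp
    also have "ln (b i * A / (a i * B)) = ln (A / B) - ln (a i / b i)"
      using ai AB by (simp add: ln_div ln_mult)
    finally have "a i * (1 - b i * A / (a i * B)) \<le> a i * (ln (a i / b i) - ln (A / B))"
      using ai by (intro mult_left_mono) auto
    moreover have "a i * (1 - b i * A / (a i * B)) = a i - b i * A / B"
      using ai AB by (simp add: field_simps)
    ultimately show ?thesis by (simp add: right_diff_distrib)
  qed
  have "0 = (\<Sum>i\<in>I. a i - b i * A / B)"
    using AB by (simp add: sum_subtractf A_def B_def flip: sum_divide_distrib sum_distrib_right)
  also have "\<dots> \<le> (\<Sum>i\<in>I. a i * ln (a i / b i) - a i * ln (A / B))"
    by (intro sum_mono pointwise)
  finally have "A * ln (A / B) \<le> (\<Sum>i\<in>I. a i * ln (a i / b i))"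
    by (simp add: sum_subtractf A_def flip: sum_distrib_right)
  then have "A * ln (A / B) / ln c \<le> (\<Sum>i\<in>I. a i * ln (a i / b i)) / ln c"
    using \<open>1 < c\<close> by (intro divide_right_mono) auto
  then show ?thesis by (simp add: log_def A_def B_def sum_divide_distrib)
qed

lemma neg_mult_log_ratio_concave:
  fixes a1 a2 b1 b2 t :: real
  assumes "0 \<le> a1" "a1 \<le> b1" "0 \<le> a2" "a2 \<le> b2" "0 \<le> t" "t \<le> 1"
  shows "t * - (a1 * log 2 (a1 / b1)) + (1 - t) * - (a2 * log 2 (a2 / b2))
    \<le> - ((t * a1 + (1 - t) * a2) * log 2 ((t * a1 + (1 - t) * a2) / (t * b1 + (1 - t) * b2)))"
proof -
  define a where "a i = (if i then t * a1 else (1 - t) * a2)" for i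
  define b where "b i = (if i then t * b1 else (1 - t) * b2)" for i
  have "sum a UNIV * log 2 (sum a UNIV / sum b UNIV) \<le> (\<Sum>i\<in>UNIV. a i * log 2 (a i / b i))"
    by (rule log_sum_inequality) (use assms in \<open>auto simp: a_def b_def zero_less_mult_iff\<close>)
  moreover have "sum a UNIV = t * a1 + (1 - t) * a2" "sum b UNIV = t * b1 + (1 - t) * b2"
    by (simp_all add: UNIV_bool a_def b_def)
  moreover have "a i * log 2 (a i / b i) = (if i then t else 1 - t) * ((if i then a1 else a2)
      * log 2 ((if i then a1 else a2) / (if i then b1 else b2)))" for i
    by (cases "i \<and> t = 0 \<or> \<not> i \<and> t = 1") (auto simp: a_def b_def)
  ultimately show ?thesis by (simp add: UNIV_bool)
qed

definition weighted_cond_entropy :: "('a \<Rightarrow> real) \<Rightarrow> 'a set \<Rightarrow> real" where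
  "weighted_cond_entropy Q C = (\<Sum>u\<in>C. - (Q u * log 2 (Q u / sum Q C)))"

lemma sum_neg_mult_log_eq_weighted_cond_entropy:
  assumes "finite C" "\<And>u. u \<in> C \<Longrightarrow> 0 \<le> Q u"
  shows "(\<Sum>u\<in>C. - (Q u * log 2 (Q u))) = weighted_cond_entropy Q C - sum Q C * log 2 (sum Q C)"
proof -
  have "Q u * log 2 (Q u) = Q u * log 2 (Q u / sum Q C) + Q u * log 2 (sum Q C)" if "u \<in> C" for u
  proof (cases "Q u = 0")
    case False
    moreover have "Q u \<le> sum Q C" using assms that by (intro member_le_sum) auto
    ultimately show ?thesis using assms(2)[OF that] by (simp add: log_divide_pos algebra_simps)
  qed simp
  then have "(\<Sum>u\<in>C. - (Q u * log 2 (Q u)))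
      = (\<Sum>u\<in>C. - (Q u * log 2 (Q u / sum Q C)) - Q u * log 2 (sum Q C))"
    by (intro sum.cong) auto
  then show ?thesis
    by (simp add: weighted_cond_entropy_def sum_subtractf sum_distrib_right)
qed

lemma weighted_cond_entropy_concave:
  assumes "finite C" "\<And>u. u \<in> C \<Longrightarrow> 0 \<le> A u" "\<And>u. u \<in> C \<Longrightarrow> 0 \<le> B u" "0 \<le> t" "t \<le> 1"
  shows "t * weighted_cond_entropy A C + (1 - t) * weighted_cond_entropy B C
    \<le> weighted_cond_entropy (\<lambda>u. t * A u + (1 - t) * B u) C"
proof -
  have mix: "sum (\<lambda>u. t * A u + (1 - t) * B u) C = t * sum A C + (1 - t) * sum B C"
    by (simp add: sum.distrib sum_distrib_left)
  have le_sum: "A u \<le> sum A C" "B u \<le> sum B C" if "u \<in> C" for u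
    using assms that by (auto intro!: member_le_sum)
  have "t * weighted_cond_entropy A C + (1 - t) * weighted_cond_entropy B C
      = (\<Sum>u\<in>C. t * - (A u * log 2 (A u / sum A C)) + (1 - t) * - (B u * log 2 (B u / sum B C)))"
    by (simp add: weighted_cond_entropy_def sum_distrib_left sum_subtractf sum_negf)
  also have "\<dots> \<le> (\<Sum>u\<in>C. - ((t * A u + (1 - t) * B u)
      * log 2 ((t * A u + (1 - t) * B u) / (t * sum A C + (1 - t) * sum B C))))"
    using assms le_sum by (intro sum_mono neg_mult_log_ratio_concave) auto
  also have "\<dots> = weighted_cond_entropy (\<lambda>u. t * A u + (1 - t) * B u) C"
    by (simp add: weighted_cond_entropy_def mix)
  finally show ?thesis .
qed

lemma weighted_cond_entropy_le:
  assumes "finite C" "\<And>u. u \<in> C \<Longrightarrow> 0 \<le> Q u" "\<And>u. u \<in> C \<Longrightarrow> 0 < w u"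
  shows "weighted_cond_entropy Q C \<le> sum Q C * log 2 (sum w C) - (\<Sum>u\<in>C. Q u * log 2 (w u))"
proof -
  let ?S = "sum Q C" and ?W = "sum w C"
  have pointwise: "- (Q u * log 2 (Q u / ?S))
      = - (Q u * log 2 (Q u / w u)) - Q u * log 2 (w u) + Q u * log 2 ?S" if "u \<in> C" for u
  proof (cases "Q u = 0")
    case False
    moreover have "Q u \<le> ?S" using assms that by (intro member_le_sum) auto
    ultimately show ?thesis
      using assms(2,3)[OF that] by (simp add: log_divide_pos algebra_simps)
  qed simp
  have total: "?S * log 2 (?S / ?W) = ?S * log 2 ?S - ?S * log 2 ?W"
  proof (cases "?S = 0")
    case False
    then obtain u where "u \<in> C" by (meson sum.neutral)
    then have "0 < ?W" using assms by (intro sum_pos2) (auto intro: less_imp_le)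
    moreover have "0 \<le> ?S" using assms(2) by (intro sum_nonneg)
    ultimately have "0 < ?W" "0 < ?S" using False by auto
    then show ?thesis by (simp add: log_divide_pos right_diff_distrib)
  qed simp
  have "?S * log 2 (?S / ?W) \<le> (\<Sum>u\<in>C. Q u * log 2 (Q u / w u))"
    using assms by (intro log_sum_inequality) (auto intro: less_imp_le)
  moreover have "weighted_cond_entropy Q C = (\<Sum>u\<in>C.
      - (Q u * log 2 (Q u / w u)) - Q u * log 2 (w u) + Q u * log 2 ?S)"
    unfolding weighted_cond_entropy_def by (rule sum.cong) (simp_all add: pointwise)
  then have "weighted_cond_entropy Q C
      = - (\<Sum>u\<in>C. Q u * log 2 (Q u / w u)) - (\<Sum>u\<in>C. Q u * log 2 (w u)) + ?S * log 2 ?S"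
    by (simp add: sum.distrib sum_subtractf sum_negf sum_distrib_right)
  ultimately show ?thesis using total by linarith
qed

lemma sum_Pow_power:
  fixes x :: "'b :: comm_semiring_1"
  assumes "finite A"
  shows "(\<Sum>u\<in>Pow A. x ^ card u) = (1 + x) ^ card A"
  using prod_add[OF assms, of "\<lambda>_. x" "\<lambda>_. 1"] by (simp add: add.commute)

lemma sum_Pow_member_power:
  fixes x :: "'b :: comm_ring_1"
  assumes "finite A" "i \<in> A"
  shows "(\<Sum>u\<in>{u\<in>Pow A. i \<in> u}. x ^ card u) = x * (1 + x) ^ (card A - 1)"
proof -
  have split: "Pow A = {u\<in>Pow A. i \<in> u} \<union> Pow (A - {i})" by auto
  have "(1 + x) ^ card A = (\<Sum>u\<in>Pow A. x ^ card u)"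
    using assms by (simp add: sum_Pow_power)
  also have "\<dots> = (\<Sum>u\<in>{u\<in>Pow A. i \<in> u}. x ^ card u) + (\<Sum>u\<in>Pow (A - {i}). x ^ card u)"
    using assms by (subst split) (rule sum.union_disjoint, auto)
  also have "(\<Sum>u\<in>Pow (A - {i}). x ^ card u) = (1 + x) ^ (card A - 1)"
    using assms by (simp add: sum_Pow_power)
  finally have "(1 + x) ^ card A = (\<Sum>u\<in>{u\<in>Pow A. i \<in> u}. x ^ card u) + (1 + x) ^ (card A - 1)" .
  moreover have "(1 + x) ^ card A = (1 + x) * (1 + x) ^ (card A - 1)"
    using assms by (metis card_gt_0_iff empty_iff power_eq_if not_gr0)
  ultimately show ?thesis by (simp add: algebra_simps)
qed

lemma finite_hamming_space [simp]: "finite (hamming_space m)"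
  by (simp add: hamming_space_def)

lemma sum_hamming_space_power:
  fixes x :: "'b :: comm_semiring_1"
  shows "(\<Sum>u\<in>hamming_space m. x ^ card u) = (1 + x) ^ m"
  by (simp add: hamming_space_def sum_Pow_power)

lemma sum_hamming_space_member_power:
  fixes x :: "'b :: comm_ring_1"
  shows "i < m \<Longrightarrow> (\<Sum>u\<in>{u\<in>hamming_space m. i \<in> u}. x ^ card u) = x * (1 + x) ^ (m - 1)"
  using sum_Pow_member_power[of "{..<m}" i x] by (simp add: hamming_space_def)

lemma sum_mult_card_eq_sum_marginals:
  fixes Q :: "nat set \<Rightarrow> real"
  shows "(\<Sum>u\<in>hamming_space m. Q u * card u) = (\<Sum>i<m. \<Sum>u\<in>{u\<in>hamming_space m. i \<in> u}. Q u)"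
proof -
  have "(\<Sum>u\<in>hamming_space m. Q u * card u) = (\<Sum>u\<in>hamming_space m. \<Sum>i<m. Q u * of_bool (i \<in> u))"
  proof (rule sum.cong)
    fix u assume "u \<in> hamming_space m"
    then have "{..<m} \<inter> {i. i \<in> u} = u" by (auto simp: hamming_space_def)
    then show "Q u * card u = (\<Sum>i<m. Q u * of_bool (i \<in> u))"
      by (simp flip: sum_distrib_left)
  qed simp
  also have "\<dots> = (\<Sum>i<m. \<Sum>u\<in>hamming_space m. Q u * of_bool (i \<in> u))"
    by (rule sum.swap)
  also have "\<dots> = (\<Sum>i<m. \<Sum>u\<in>{u\<in>hamming_space m. i \<in> u}. Q u)"
    by (simp add: Int_def conj_commute)
  finally show ?thesis .
qed

definition even_vectors :: "nat \<Rightarrow> nat set set" where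
  "even_vectors m = {u\<in>hamming_space m. even (card u)}"

definition odd_vectors :: "nat \<Rightarrow> nat set set" where
  "odd_vectors m = {u\<in>hamming_space m. odd (card u)}"

lemma finite_even_vectors [simp]: "finite (even_vectors m)"
  by (simp add: even_vectors_def)

lemma finite_odd_vectors [simp]: "finite (odd_vectors m)"
  by (simp add: odd_vectors_def)

lemma sum_hamming_space_parity_split:
  "sum f (hamming_space m) = sum f (even_vectors m) + sum f (odd_vectors m)"
proof -
  have "hamming_space m = even_vectors m \<union> odd_vectors m" "even_vectors m \<inter> odd_vectors m = {}"
    by (auto simp: even_vectors_def odd_vectors_def)
  then show ?thesis by (simp add: sum.union_disjoint)
qed

lemma feasible_nonneg: "feasible m \<gamma> \<delta> Q \<Longrightarrow> u \<in> hamming_space m \<Longrightarrow> 0 \<le> Q u"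
  by (simp add: feasible_def)

lemma feasible_sum_odd_vectors: "feasible m \<gamma> \<delta> Q \<Longrightarrow> sum Q (odd_vectors m) = \<delta>"
  by (simp add: feasible_def odd_vectors_def)

lemma feasible_sum_even_vectors:
  assumes "feasible m \<gamma> \<delta> Q"
  shows "sum Q (even_vectors m) = 1 - \<delta>"
proof -
  have "sum Q (hamming_space m) = 1" using assms by (simp add: feasible_def)
  then show ?thesis
    using sum_hamming_space_parity_split[of Q m] feasible_sum_odd_vectors[OF assms] by simp
qed

lemma feasible_sum_mult_card:
  "feasible m \<gamma> \<delta> Q \<Longrightarrow> (\<Sum>u\<in>hamming_space m. Q u * real (card u)) = real m * \<gamma>"
  by (simp add: sum_mult_card_eq_sum_marginals feasible_def)

lemma feasible_convex_combination:
  assumes "feasible m \<gamma> \<delta>1 A" "feasible m \<gamma> \<delta>2 B" "0 \<le> t" "t \<le> 1"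
  shows "feasible m \<gamma> (t * \<delta>1 + (1 - t) * \<delta>2) (\<lambda>u. t * A u + (1 - t) * B u)"
proof -
  have mix: "sum (\<lambda>u. t * A u + (1 - t) * B u) X = t * sum A X + (1 - t) * sum B X" for X
    by (simp add: sum.distrib sum_distrib_left)
  have "t * x + (1 - t) * x = x" for x :: real by (simp add: algebra_simps)
  then show ?thesis using assms unfolding feasible_def mix by auto
qed

definition parity_cond_entropy :: "nat \<Rightarrow> (nat set \<Rightarrow> real) \<Rightarrow> real" where
  "parity_cond_entropy m Q =
     weighted_cond_entropy Q (even_vectors m) + weighted_cond_entropy Q (odd_vectors m)"

lemma entropy_dist_eq_parity_cond_entropy:
  assumes "feasible m \<gamma> \<delta> Q"
  shows "entropy_dist m Q = bin_entropy \<delta> + parity_cond_entropy m Q"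
proof -
  have "\<And>u. u \<in> even_vectors m \<Longrightarrow> 0 \<le> Q u" "\<And>u. u \<in> odd_vectors m \<Longrightarrow> 0 \<le> Q u"
    using feasible_nonneg[OF assms] by (auto simp: even_vectors_def odd_vectors_def)
  then show ?thesis
    unfolding entropy_dist_def sum_hamming_space_parity_split[of _ m] parity_cond_entropy_def
    by (simp add: sum_neg_mult_log_eq_weighted_cond_entropy bin_entropy_def
        feasible_sum_even_vectors[OF assms] feasible_sum_odd_vectors[OF assms])
qed

lemma parity_cond_entropy_concave:
  assumes "\<And>u. u \<in> hamming_space m \<Longrightarrow> 0 \<le> A u" "\<And>u. u \<in> hamming_space m \<Longrightarrow> 0 \<le> B u"
    and "0 \<le> t" "t \<le> 1"
  shows "t * parity_cond_entropy m A + (1 - t) * parity_cond_entropy m B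
    \<le> parity_cond_entropy m (\<lambda>u. t * A u + (1 - t) * B u)"
proof -
  have "t * weighted_cond_entropy A C + (1 - t) * weighted_cond_entropy B C
      \<le> weighted_cond_entropy (\<lambda>u. t * A u + (1 - t) * B u) C" if "C \<subseteq> hamming_space m" for C
    using assms that finite_subset[OF that] by (intro weighted_cond_entropy_concave) auto
  from this[of "even_vectors m"] this[of "odd_vectors m"] show ?thesis
    unfolding parity_cond_entropy_def by (auto simp: even_vectors_def odd_vectors_def algebra_simps)
qed

definition even_partition :: "nat \<Rightarrow> real \<Rightarrow> real" where
  "even_partition m r = (\<Sum>u\<in>even_vectors m. r ^ card u)"

lemma even_minus_odd_partition:
  "even_partition m r - (\<Sum>u\<in>odd_vectors m. r ^ card u) = (1 - r) ^ m"
proof -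
  have "(\<Sum>u\<in>odd_vectors m. (- r) ^ card u) = - (\<Sum>u\<in>odd_vectors m. r ^ card u)"
    unfolding sum_negf[symmetric] by (rule sum.cong) (auto simp: odd_vectors_def)
  moreover have "(\<Sum>u\<in>even_vectors m. (- r) ^ card u) = even_partition m r"
    unfolding even_partition_def by (rule sum.cong) (auto simp: even_vectors_def)
  ultimately show ?thesis
    using sum_hamming_space_power[of "- r" m] sum_hamming_space_parity_split[of "\<lambda>u. (- r) ^ card u" m]
    by simp
qed

lemma two_even_partition: "2 * even_partition m r = (1 + r) ^ m + (1 - r) ^ m"
  using even_minus_odd_partition[of m r] sum_hamming_space_power[of r m]
    sum_hamming_space_parity_split[of "\<lambda>u. r ^ card u" m]
  by (simp add: even_partition_def)

lemma empty_in_even_vectors: "{} \<in> even_vectors m"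
  by (simp add: even_vectors_def hamming_space_def)

lemma singleton_in_odd_vectors: "i < m \<Longrightarrow> {i} \<in> odd_vectors m"
  by (simp add: odd_vectors_def hamming_space_def)

lemma even_partition_pos: "0 \<le> r \<Longrightarrow> 0 < even_partition m r"
  unfolding even_partition_def using empty_in_even_vectors[of m]
  by (intro sum_pos2[where i = "{}"]) auto

lemma parity_cond_entropy_le:
  assumes Q: "feasible m \<gamma> \<delta> Q" and "0 < m" "0 < r" "r \<le> 1"
  shows "parity_cond_entropy m Q \<le> log 2 (even_partition m r) - m * \<gamma> * log 2 r"
proof -
  define Ze where "Ze = even_partition m r"
  define Zo where "Zo = (\<Sum>u\<in>odd_vectors m. r ^ card u)"
  have class_bound: "weighted_cond_entropy Q C
      \<le> sum Q C * log 2 (\<Sum>u\<in>C. r ^ card u) - (\<Sum>u\<in>C. Q u * card u) * log 2 r"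
    if "C \<subseteq> hamming_space m" for C
  proof -
    have "weighted_cond_entropy Q C
        \<le> sum Q C * log 2 (\<Sum>u\<in>C. r ^ card u) - (\<Sum>u\<in>C. Q u * log 2 (r ^ card u))"
      using that \<open>0 < r\<close> feasible_nonneg[OF Q]
      by (intro weighted_cond_entropy_le) (auto intro: finite_subset)
    moreover have "(\<Sum>u\<in>C. Q u * log 2 (r ^ card u)) = (\<Sum>u\<in>C. Q u * card u) * log 2 r"
      using \<open>0 < r\<close> by (simp add: log_nat_power sum_distrib_right mult.assoc)
    ultimately show ?thesis by simp
  qed
  have even: "weighted_cond_entropy Q (even_vectors m)
      \<le> (1 - \<delta>) * log 2 Ze - (\<Sum>u\<in>even_vectors m. Q u * card u) * log 2 r"
    using class_bound[of "even_vectors m"] feasible_sum_even_vectors[OF Q]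
    by (simp add: Ze_def even_partition_def even_vectors_def)
  have odd: "weighted_cond_entropy Q (odd_vectors m)
      \<le> \<delta> * log 2 Zo - (\<Sum>u\<in>odd_vectors m. Q u * card u) * log 2 r"
    using class_bound[of "odd_vectors m"] feasible_sum_odd_vectors[OF Q]
    by (simp add: Zo_def odd_vectors_def)
  have "0 < Zo"
    unfolding Zo_def using singleton_in_odd_vectors[OF \<open>0 < m\<close>] \<open>0 < r\<close>
    by (intro sum_pos2[where i = "{0}"]) auto
  moreover have "Zo \<le> Ze"
    using even_minus_odd_partition[of m r] zero_le_power[of "1 - r" m] \<open>r \<le> 1\<close>
    unfolding Ze_def Zo_def by linarith
  moreover have "0 \<le> \<delta>"
    using feasible_nonneg[OF Q] feasible_sum_odd_vectors[OF Q] sum_nonneg[of "odd_vectors m" Q]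
    by (auto simp: odd_vectors_def)
  ultimately have "\<delta> * log 2 Zo \<le> \<delta> * log 2 Ze"
    by (intro mult_left_mono) auto
  moreover have "(\<Sum>u\<in>even_vectors m. Q u * card u) * log 2 r + (\<Sum>u\<in>odd_vectors m. Q u * card u) * log 2 r
      = m * \<gamma> * log 2 r"
    using feasible_sum_mult_card[OF Q] sum_hamming_space_parity_split[of "\<lambda>u. Q u * card u" m]
    by (simp flip: distrib_right)
  moreover have "(1 - \<delta>) * log 2 Ze + \<delta> * log 2 Ze = log 2 Ze"
    by (simp add: algebra_simps)
  ultimately show ?thesis
    using even odd unfolding parity_cond_entropy_def Ze_def by linarith
qed

definition even_gibbs :: "nat \<Rightarrow> real \<Rightarrow> nat set \<Rightarrow> real" where
  "even_gibbs m r u = (if even (card u) then r ^ card u / even_partition m r else 0)"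

definition even_gibbs_marginal :: "nat \<Rightarrow> real \<Rightarrow> real" where
  "even_gibbs_marginal m r = (r * (1 + r) ^ (m - 1) - r * (1 - r) ^ (m - 1)) / ((1 + r) ^ m + (1 - r) ^ m)"

lemma even_gibbs_eq: "even_gibbs m r u = (r ^ card u + (- r) ^ card u) / (2 * even_partition m r)"
  by (simp add: even_gibbs_def)

lemma sum_even_gibbs_member:
  assumes "i < m"
  shows "(\<Sum>u\<in>{u\<in>hamming_space m. i \<in> u}. even_gibbs m r u) = even_gibbs_marginal m r"
  unfolding even_gibbs_eq sum_divide_distrib[symmetric] sum.distrib
    sum_hamming_space_member_power[OF assms] two_even_partition even_gibbs_marginal_def
  by simp

lemma sum_even_gibbs:
  assumes "0 \<le> r"
  shows "(\<Sum>u\<in>hamming_space m. even_gibbs m r u) = 1"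
proof -
  have "0 < 2 * even_partition m r" using even_partition_pos[OF assms] by simp
  then show ?thesis
    unfolding even_gibbs_eq sum_divide_distrib[symmetric] sum.distrib sum_hamming_space_power
      two_even_partition
    by simp
qed

lemma feasible_even_gibbs:
  assumes "0 \<le> r"
  shows "feasible m (even_gibbs_marginal m r) 0 (even_gibbs m r)"
proof -
  have "(\<Sum>u\<in>{u\<in>hamming_space m. odd (card u)}. even_gibbs m r u) = 0"
    by (rule sum.neutral) (auto simp: even_gibbs_def)
  moreover have "0 \<le> even_gibbs m r u" for u
    using assms even_partition_pos[OF assms, of m] by (simp add: even_gibbs_def)
  ultimately show ?thesis
    using assms by (simp add: feasible_def sum_even_gibbs sum_even_gibbs_member)
qed

lemma entropy_dist_even_gibbs:
  assumes "0 < r"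
  shows "entropy_dist m (even_gibbs m r)
    = log 2 (even_partition m r) - m * even_gibbs_marginal m r * log 2 r"
proof -
  let ?P = "even_gibbs m r"
  have "- (?P u * log 2 (?P u)) = log 2 (even_partition m r) * ?P u - ?P u * card u * log 2 r" for u
    using assms even_partition_pos[of r m]
    by (simp add: even_gibbs_def log_divide_pos log_nat_power algebra_simps)
  then have "entropy_dist m ?P
      = log 2 (even_partition m r) * (\<Sum>u\<in>hamming_space m. ?P u)
        - (\<Sum>u\<in>hamming_space m. ?P u * card u) * log 2 r"
    by (simp add: entropy_dist_def sum_subtractf sum_distrib_left sum_distrib_right)
  then show ?thesis
    using assms feasible_sum_mult_card[OF feasible_even_gibbs] by (simp add: sum_even_gibbs)
qed

lemma parity_cond_entropy_le_even_gibbs: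
  assumes Q: "feasible m \<gamma> \<delta> Q" and "0 < m" "0 < r" "r \<le> 1" "even_gibbs_marginal m r = \<gamma>"
  shows "parity_cond_entropy m Q \<le> parity_cond_entropy m (even_gibbs m r)"
  using parity_cond_entropy_le[OF assms(1-4)] entropy_dist_even_gibbs[OF \<open>0 < r\<close>, of m]
    entropy_dist_eq_parity_cond_entropy[OF feasible_even_gibbs, of r m] assms(3,5)
  by (simp add: bin_entropy_def)

lemma even_gibbs_marginal_surj:
  assumes "1 < m" "0 < \<gamma>" "\<gamma> < 1/2"
  obtains r where "0 < r" "r \<le> 1" "even_gibbs_marginal m r = \<gamma>"
proof -
  have "continuous_on {0..1} (even_gibbs_marginal m)"
  proof -
    have "(1 + x) ^ m + (1 - x) ^ m \<noteq> 0" if "x \<in> {0..1}" for x :: real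
    proof -
      have "0 < (1 + x) ^ m" "0 \<le> (1 - x) ^ m" using that by auto
      then show ?thesis by linarith
    qed
    then show ?thesis unfolding even_gibbs_marginal_def by (intro continuous_intros) auto
  qed
  moreover have "even_gibbs_marginal m 0 = 0" by (simp add: even_gibbs_marginal_def)
  moreover have "even_gibbs_marginal m 1 = 1/2"
    using \<open>1 < m\<close> by (cases m) (simp_all add: even_gibbs_marginal_def)
  ultimately obtain r where "0 \<le> r" "r \<le> 1" "even_gibbs_marginal m r = \<gamma>"
    using IVT'[of "even_gibbs_marginal m" 0 \<gamma> 1] assms by auto
  moreover have "r \<noteq> 0" using calculation \<open>even_gibbs_marginal m 0 = 0\<close> assms by auto
  ultimately show ?thesis using that[of r] by simp
qed

lemma exists_feasible_lower_parity:
  assumes "1 < m" "0 < \<gamma>" "\<gamma> < 1/2" "0 \<le> \<delta>1" "\<delta>1 \<le> \<delta>2" and Q: "feasible m \<gamma> \<delta>2 Q"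
  obtains Q1 where "feasible m \<gamma> \<delta>1 Q1" "parity_cond_entropy m Q \<le> parity_cond_entropy m Q1"
proof (cases "\<delta>1 = \<delta>2")
  case False
  obtain r where r: "0 < r" "r \<le> 1" "even_gibbs_marginal m r = \<gamma>"
    using even_gibbs_marginal_surj assms(1-3) .
  define P where "P = even_gibbs m r"
  have P: "feasible m \<gamma> 0 P"
    unfolding P_def using feasible_even_gibbs[of r m] r by simp
  have "parity_cond_entropy m Q \<le> parity_cond_entropy m P"
    unfolding P_def using parity_cond_entropy_le_even_gibbs[OF Q _ r] assms(1) by simp
  define t where "t = \<delta>1 / \<delta>2"
  define Q1 where "Q1 u = t * Q u + (1 - t) * P u" for u
  have t: "0 \<le> t" "t \<le> 1" "t * \<delta>2 = \<delta>1" using assms False by (auto simp: t_def)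
  have "feasible m \<gamma> \<delta>1 Q1"
    unfolding Q1_def using feasible_convex_combination[OF Q P t(1,2)] t(3) by simp
  moreover have "t * parity_cond_entropy m Q + (1 - t) * parity_cond_entropy m P \<le> parity_cond_entropy m Q1"
    unfolding Q1_def using feasible_nonneg[OF Q] feasible_nonneg[OF P] t
    by (intro parity_cond_entropy_concave) auto
  moreover have "(1 - t) * parity_cond_entropy m Q \<le> (1 - t) * parity_cond_entropy m P"
    using \<open>parity_cond_entropy m Q \<le> parity_cond_entropy m P\<close> t by (intro mult_left_mono) auto
  moreover have "t * parity_cond_entropy m Q + (1 - t) * parity_cond_entropy m Q = parity_cond_entropy m Q"
    by (simp add: algebra_simps)
  ultimately show ?thesis using that[of Q1] by linarith
qed (use that Q in blast)

lemma F_le_if_dominated: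
  assumes "\<And>Q. feasible m \<gamma> \<delta> Q \<Longrightarrow> \<exists>Q'. feasible m \<gamma> \<delta>' Q'
      \<and> entropy_dist m Q - bin_entropy \<delta> \<le> entropy_dist m Q' - bin_entropy \<delta>'"
  shows "F m \<gamma> \<delta> \<le> F m \<gamma> \<delta>'"
proof (cases "\<exists>Q. feasible m \<gamma> \<delta> Q")
  case True
  let ?c = "bin_entropy \<delta> - bin_entropy \<delta>'"
  have "Hstar m \<gamma> \<delta> \<le> Hstar m \<gamma> \<delta>' + ereal ?c"
    unfolding Hstar_def
  proof (rule Sup_least, clarify)
    fix Q assume "feasible m \<gamma> \<delta> Q"
    then obtain Q' where Q': "feasible m \<gamma> \<delta>' Q'"
      "entropy_dist m Q - bin_entropy \<delta> \<le> entropy_dist m Q' - bin_entropy \<delta>'"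
      using assms by blast
    have "ereal (entropy_dist m Q) \<le> ereal (entropy_dist m Q') + ereal ?c"
      using Q'(2) by simp
    also have "\<dots> \<le> Sup {ereal (entropy_dist m Q) | Q. feasible m \<gamma> \<delta>' Q} + ereal ?c"
      using Q'(1) by (intro add_right_mono Sup_upper) blast
    finally show "ereal (entropy_dist m Q) \<le> Sup {ereal (entropy_dist m Q) | Q. feasible m \<gamma> \<delta>' Q} + ereal ?c" .
  qed
  then have "Hstar m \<gamma> \<delta> - ereal (bin_entropy \<delta>) \<le> Hstar m \<gamma> \<delta>' + ereal ?c - ereal (bin_entropy \<delta>)"
    by (rule ereal_minus_mono) simp
  also have "\<dots> = Hstar m \<gamma> \<delta>' - ereal (bin_entropy \<delta>')"
    by (cases "Hstar m \<gamma> \<delta>'") auto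
  finally show ?thesis using True assms by (auto simp: F_def)
qed (simp add: F_def)

theorem mainTheorem15:
  fixes m :: nat and \<gamma> \<delta>1 \<delta>2 :: real
  assumes "m > 1" and "0 < \<gamma>" and "\<gamma> < 1/2"
    and "0 \<le> \<delta>1" and "\<delta>1 \<le> \<delta>2" and "\<delta>2 \<le> 1"
  shows "F m \<gamma> \<delta>2 \<le> F m \<gamma> \<delta>1"
proof (rule F_le_if_dominated)
  fix Q assume Q: "feasible m \<gamma> \<delta>2 Q"
  obtain Q1 where Q1: "feasible m \<gamma> \<delta>1 Q1" "parity_cond_entropy m Q \<le> parity_cond_entropy m Q1"
    using exists_feasible_lower_parity[OF assms(1-5) Q] .
  then show "\<exists>Q1. feasible m \<gamma> \<delta>1 Q1
      \<and> entropy_dist m Q - bin_entropy \<delta>2 \<le> entropy_dist m Q1 - bin_entropy \<delta>1"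
    using entropy_dist_eq_parity_cond_entropy[OF Q] entropy_dist_eq_parity_cond_entropy[OF Q1(1)]
    by auto
qed

end
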